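(* In the setting of the context, let $(\omega,u,p)\in W\times V\times Q$ solve the continuous problem and $(\omega_h,u_h,p_h)\in W_h\times V_h\times Q_h$ solve the discrete problem. Then \[ \|\mathrm{d}(\omega-\omega_h)\|_{L^2\Lambda^{n-1}}\le\inf_{\tau_h\in W_h}\|\mathrm{d}(\omega-\tau_h)\|_{L^2\Lambda^{n-1}},\qquad \|\mathrm{d}(u-u_h)\|_{L^2\Lambda^{n}}\le\inf_{v_h\in V_h}\|\mathrm{d}(u-v_h)\|_{L^2\Lambda^{n}}. \]
   Context: $\Omega\subset\mathbb{R}^n$, $n\ge2$, bounded contractible domain. $L^2\Lambda^k(\Omega)$: square-integrable differential $k$-forms with inner product $(a,b)_\Omega=\int_\Omega a\wedge\star b$; $H\Lambda^k(\Omega)=\{a\in L^2\Lambda^k:\mathrm{d}a\in L^2\Lambda^{k+1}\}$; $\mathrm{d}$ exterior derivative, $\mathrm{d}^*$ codifferential, $\mathrm{tr}$ boundary trace. The boundary $\Gamma=\partial\Omega$ is split twice into disjoint parts $\Gamma=\Gamma_\omega\cup\Gamma_t=\Gamma_n\cup\Gamma_\pi$; $\Gamma_1=\Gamma_t\cap\Gamma_n$, $\Gamma_2=\Gamma_t\cap\Gamma_\pi$, $\Gamma_4=\Gamma_\omega\cap\Gamma_\pi$. $W=\{\tau\in H\Lambda^{n-2}:\mathrm{tr}\,\tau=0\text{ on }\Gamma_\omega\}$; $V=\{v\in H\Lambda^{n-1}:\mathrm{tr}\,v=0\text{ on }\Gamma_n\}$ (modulo $\mathrm{d}^*$-free forms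 if $\Gamma_4\ne\emptyset$); $Q=L^2\Lambda^n$ (modulo constants if $\Gamma_\pi=\emptyset$). $\mathsf{a}(\tau,\kappa)=(\tau,\kappa)_\Omega$, $\mathsf{b}(v,q)=(\mathrm{d}v,q)_\Omega$, $\mathsf{c}(\tau,v)=(\mathrm{d}\tau,v)_\Omega$, $\mathsf{e}(v,w)=(\mathrm{d}v,\mathrm{d}w)_\Omega$; for data $f\in L^2\Lambda^{n-1}$, $g\in L^2\Lambda^n$, $u_{b,t}\in H^{1/2}\Lambda^{n-1}(\Gamma_t)$, $\Pi_b\in H^{1/2}\Lambda^n(\Gamma_\pi)$: $\mathsf{f}(v)=(v,f)_\Omega+\int_{\Gamma_2\cup\Gamma_4}\mathrm{tr}\,v\wedge\Pi_b$, $\mathsf{g}(q)=(q,g)_\Omega$, $\mathsf{h}(\tau)=-\int_{\Gamma_1\cup\Gamma_2}\mathrm{tr}\,\tau\wedge u_{b,t}$. Continuous problem: find $(\omega,u,p)\in W\times V\times Q$ with $\mathsf{a}(\tau,\omega)-\mathsf{c}(\tau,u)=\mathsf{h}(\tau)$ $\forall\tau\in W$, $\mathsf{e}(v,u)+\mathsf{c}(\omega,v)+\mathsf{b}(v,p)=\mathsf{f}(v)$ $\forall v\in V$, $\mathsf{b}(u,q)=\mathsf{g}(q)$ $\forall q\in Q$. Discrete spaces: finite-dimensional $W_h\subset W$, $V_h\subset V$, $Q_h\subset Q$ with $\mathrm{d}W_h\subset V_h$ and $\mathrm{d}V_h=Q_h$ (compatible spaces, e.g. the paper's mimetic spectral element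 spaces). The discrete problem is the same system posed on $W_h\times V_h\times Q_h$ with test functions in $W_h\times V_h\times Q_h$. *)

theory Defs
  imports "HOL-Analysis.Analysis"
begin

text \<open>Abstract Hilbert-complex rendering of the mixed vorticity-velocity-pressure
  problem. The type 'a plays the role of L2 (n-2)-forms, 'b of L2 (n-1)-forms,
  'c of L2 n-forms; the L2 inner product is the type's inner product.
  dW :: 'a => 'b and dV :: 'b => 'c are the exterior derivatives on
  (n-2)- and (n-1)-forms.\<close>

definition mixed_solution ::
  "'a::real_inner set \<Rightarrow> 'b::real_inner set \<Rightarrow> 'c::real_inner set \<Rightarrow>
   ('a \<Rightarrow> 'b) \<Rightarrow> ('b \<Rightarrow> 'c) \<Rightarrow>
   ('a \<Rightarrow> real) \<Rightarrow> ('b \<Rightarrow> real) \<Rightarrow> ('c \<Rightarrow> real) \<Rightarrow>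
   'a \<Rightarrow> 'b \<Rightarrow> 'c \<Rightarrow> bool" where
  "mixed_solution W V Q dW dV h f g \<omega> u p \<longleftrightarrow>
     \<omega> \<in> W \<and> u \<in> V \<and> p \<in> Q \<and>
     (\<forall>\<tau>\<in>W. inner \<tau> \<omega> - inner (dW \<tau>) u = h \<tau>) \<and>
     (\<forall>v\<in>V. inner (dV v) (dV u) + inner (dW \<omega>) v + inner (dV v) p = f v) \<and>
     (\<forall>q\<in>Q. inner (dV u) q = g q)"

end

theory Submission
  imports Defs
begin

text \<open>Both estimates are instances of Galerkin orthogonality. Testing the velocity
  equation with \<open>dW \<tau>\<^sub>h\<close> kills the terms with \<open>dV\<close> (since \<open>dV \<circ> dW = 0\<close>), so
  \<open>dW (\<omega> - \<omega>\<^sub>h)\<close> is orthogonal to \<open>dW W\<^sub>h\<close>; testing the divergence equation with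
  \<open>dV v\<^sub>h\<close>, which ranges over \<open>Q\<^sub>h\<close>, shows that \<open>dV (u - u\<^sub>h)\<close> is orthogonal to
  \<open>dV V\<^sub>h\<close>. An error orthogonal to the image of the discrete space is, by
  Pythagoras, no larger than the error of any other element of that space.\<close>

lemma norm_le_norm_add_if_orthogonal:
  fixes a b :: "'x::real_inner"
  assumes "orthogonal a b"
  shows "norm a \<le> norm (a + b)"
proof -
  have "(norm a)\<^sup>2 \<le> (norm (a + b))\<^sup>2"
    using norm_add_Pythagorean[OF assms] by simp
  then show ?thesis
    by (rule power2_le_imp_le) simp
qed

lemma linear_image_best_approximation:
  fixes L :: "'x::real_vector \<Rightarrow> 'y::real_inner"
  assumes "linear L" and "subspace S" and "x\<^sub>h \<in> S"
    and orth: "\<And>z. z \<in> S \<Longrightarrow> orthogonal (L (x - x\<^sub>h)) (L z)"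
  shows "norm (L (x - x\<^sub>h)) \<le> (INF y\<in>S. norm (L (x - y)))"
proof (rule cINF_greatest)
  show "S \<noteq> {}" using \<open>x\<^sub>h \<in> S\<close> by blast
next
  fix y assume "y \<in> S"
  then have "x\<^sub>h - y \<in> S"
    using \<open>subspace S\<close> \<open>x\<^sub>h \<in> S\<close> by (simp add: subspace_diff)
  moreover have "L (x - y) = L (x - x\<^sub>h) + L (x\<^sub>h - y)"
    using linear_add[OF \<open>linear L\<close>, of "x - x\<^sub>h" "x\<^sub>h - y"] by simp
  ultimately show "norm (L (x - x\<^sub>h)) \<le> norm (L (x - y))"
    using orth norm_le_norm_add_if_orthogonal by metis
qed

lemma orthogonal_linear_diff:
  fixes L :: "'x::real_vector \<Rightarrow> 'y::real_inner"
  assumes "linear L" and "inner (L x) w = inner (L x') w"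
  shows "orthogonal (L (x - x')) w"
  using assms by (simp add: orthogonal_def linear_diff inner_diff_left)

lemma mixed_solution_closed_test:
  assumes "mixed_solution W V Q dW dV h f g \<omega> u p" and "v \<in> V" and "dV v = 0"
  shows "inner (dW \<omega>) v = f v"
  using assms by (auto simp: mixed_solution_def)

lemma mixed_solution_divergence_eq:
  assumes "mixed_solution W V Q dW dV h f g \<omega> u p" and "q \<in> Q"
  shows "inner (dV u) q = g q"
  using assms by (auto simp: mixed_solution_def)

theorem proposition5p6:
  fixes W Wh :: "'a::real_inner set" and V Vh :: "'b::real_inner set"
    and Q Qh :: "'c::real_inner set"
    and dW :: "'a \<Rightarrow> 'b" and dV :: "'b \<Rightarrow> 'c"
    and h :: "'a \<Rightarrow> real" and f :: "'b \<Rightarrow> real" and g :: "'c \<Rightarrow> real"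
    and \<omega> \<omega>h :: 'a and u uh :: 'b and p ph :: 'c
  assumes "linear dW" and "linear dV"
    and "subspace W" and "subspace V" and "subspace Q"
    and "\<forall>\<tau>\<in>W. dV (dW \<tau>) = 0"
    and "subspace Wh" and "subspace Vh" and "subspace Qh"
    and "\<exists>B. finite B \<and> Wh = span B" and "\<exists>B. finite B \<and> Vh = span B"
    and "\<exists>B. finite B \<and> Qh = span B"
    and "Wh \<subseteq> W" and "Vh \<subseteq> V" and "Qh \<subseteq> Q"
    and "dW ` Wh \<subseteq> Vh" and "dV ` Vh = Qh"
    and "mixed_solution W V Q dW dV h f g \<omega> u p"
    and "mixed_solution Wh Vh Qh dW dV h f g \<omega>h uh ph"
  shows "norm (dW (\<omega> - \<omega>h)) \<le> (INF \<tau>h\<in>Wh. norm (dW (\<omega> - \<tau>h))) \<and>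
         norm (dV (u - uh)) \<le> (INF vh\<in>Vh. norm (dV (u - vh)))"
proof
  note sol = assms(18) and sol\<^sub>h = assms(19)
  have "\<omega>h \<in> Wh" and "uh \<in> Vh"
    using sol\<^sub>h by (auto simp: mixed_solution_def)
  show "norm (dW (\<omega> - \<omega>h)) \<le> (INF \<tau>h\<in>Wh. norm (dW (\<omega> - \<tau>h)))"
  proof (rule linear_image_best_approximation[OF \<open>linear dW\<close> \<open>subspace Wh\<close> \<open>\<omega>h \<in> Wh\<close>])
    fix \<tau> assume "\<tau> \<in> Wh"
    then have "dW \<tau> \<in> Vh" and "dV (dW \<tau>) = 0"
      using assms(6,13,16) by auto
    then show "orthogonal (dW (\<omega> - \<omega>h)) (dW \<tau>)"
      using assms(14) mixed_solution_closed_test[OF sol] mixed_solution_closed_test[OF sol\<^sub>h]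
      by (intro orthogonal_linear_diff[OF \<open>linear dW\<close>]) auto
  qed
  show "norm (dV (u - uh)) \<le> (INF vh\<in>Vh. norm (dV (u - vh)))"
  proof (rule linear_image_best_approximation[OF \<open>linear dV\<close> \<open>subspace Vh\<close> \<open>uh \<in> Vh\<close>])
    fix v assume "v \<in> Vh"
    then have "dV v \<in> Qh"
      using assms(17) by auto
    then show "orthogonal (dV (u - uh)) (dV v)"
      using assms(15) mixed_solution_divergence_eq[OF sol] mixed_solution_divergence_eq[OF sol\<^sub>h]
      by (intro orthogonal_linear_diff[OF \<open>linear dV\<close>]) auto
  qed
qed

end
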